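(* A compact $\mathbb{R}$-tree of infinite total length cannot be isometrically embedded into a finite-dimensional linear subspace of $L^1$ (of any measure space).
   Context: An $\mathbb{R}$-tree is a uniquely geodesic metric space (any two points $x,y$ are joined by a unique segment $\llbracket x,y\rrbracket$, i.e. a subset isometric to a compact interval with endpoints $x,y$) such that $\llbracket x,z\rrbracket\subseteq\llbracket x,y\rrbracket\cup\llbracket y,z\rrbracket$ for all $x,y,z$. Its skeleton is $\operatorname{Sk}(X)=\bigcup_{x,y}\llbracket x,y\rrbracket\setminus\{x,y\}$ and its total length is $\mathscr{H}^1(\operatorname{Sk}(X))\in[0,\infty]$, with $\mathscr H^1$ the one-dimensional Hausdorff measure. *)

theory Defs
  imports "HOL-Analysis.Analysis" "HOL-Probability.Probability"
begin

definition is_segment :: "'a::metric_space set \<Rightarrow> 'a \<Rightarrow> 'a \<Rightarrow> 'a set \<Rightarrow> bool" where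
  "is_segment X x y S \<longleftrightarrow> S \<subseteq> X \<and>
     (\<exists>\<gamma>::real \<Rightarrow> 'a. \<gamma> ` {0..dist x y} = S \<and> \<gamma> 0 = x \<and> \<gamma> (dist x y) = y \<and>
        (\<forall>s\<in>{0..dist x y}. \<forall>t\<in>{0..dist x y}. dist (\<gamma> s) (\<gamma> t) = \<bar>s - t\<bar>))"

definition R_tree :: "'a::metric_space set \<Rightarrow> bool" where
  "R_tree X \<longleftrightarrow>
     (\<forall>x\<in>X. \<forall>y\<in>X. \<exists>!S. is_segment X x y S) \<and>
     (\<forall>x\<in>X. \<forall>y\<in>X. \<forall>z\<in>X. \<forall>S1 S2 S3.
        is_segment X x y S1 \<longrightarrow> is_segment X y z S2 \<longrightarrow> is_segment X x z S3 \<longrightarrow>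
        S3 \<subseteq> S1 \<union> S2)"

definition skeleton :: "'a::metric_space set \<Rightarrow> 'a set" where
  "skeleton X = \<Union>{S - {x, y} | x y S. x \<in> X \<and> y \<in> X \<and> is_segment X x y S}"

definition hausdorff1_delta :: "real \<Rightarrow> 'a::metric_space set \<Rightarrow> ennreal" where
  "hausdorff1_delta \<delta> A =
     (INF C \<in> {C :: nat \<Rightarrow> 'a set. A \<subseteq> (\<Union>i. C i) \<and> (\<forall>i. bounded (C i) \<and> diameter (C i) \<le> \<delta>)}.
        (\<Sum>i. ennreal (diameter (C i))))"

definition hausdorff1 :: "'a::metric_space set \<Rightarrow> ennreal" where
  "hausdorff1 A = (SUP \<delta> \<in> {0<..}. hausdorff1_delta \<delta> A)"

end

theory Submission
  imports Defs
begin

text \<open>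
  A compact \<open>\<real>\<close>-tree with finitely many leaves has finite total length: seen from a base
  point \<open>r\<close>, every point of the skeleton can be pushed outwards, as far as compactness allows,
  to a leaf, so the skeleton lies in finitely many geodesics \<open>[r, y]\<close>.

  Now let \<open>f\<close> embed the tree isometrically into the span of finitely many \<open>g\<^sub>i\<close> in \<open>L\<^sup>1\<close>.
  Among finitely many leaves \<open>x\<^sub>1, ..., x\<^sub>m\<close>, each \<open>x\<^sub>k\<close> has a branch point \<open>b\<^sub>k\<close> beyond which
  all the other leaves lie. Equality in the triangle inequality of \<open>L\<^sup>1\<close> holds pointwise almost
  everywhere, so \<open>f b\<^sub>k\<close> lies pointwise between \<open>f x\<^sub>k\<close> and \<open>f x\<^sub>l\<close>; hence the increments
  \<open>f x\<^sub>k - f b\<^sub>k\<close> have pairwise opposite signs, and normalised they form \<open>m\<close> points of the unit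
  sphere at mutual distance \<open>2\<close>. The unit ball of a finite-dimensional normed space is totally
  bounded, which bounds \<open>m\<close>; so there are only finitely many leaves.
\<close>

section \<open>Betweenness in \<open>\<real>\<close>-trees\<close>

definition metric_between :: "'a::metric_space \<Rightarrow> 'a \<Rightarrow> 'a \<Rightarrow> bool" where
  "metric_between x p y \<longleftrightarrow> dist x p + dist p y = dist x y"

lemma metric_between_sym: "metric_between x p y \<Longrightarrow> metric_between y p x"
  unfolding metric_between_def by (simp add: dist_commute add.commute)

lemma metric_between_trans_left: "metric_between x y z \<Longrightarrow> metric_between x p y \<Longrightarrow> metric_between x p z"
  unfolding metric_between_def by (smt (verit) dist_triangle)

lemma metric_between_trans_right: "metric_between x y z \<Longrightarrow> metric_between y p z \<Longrightarrow> metric_between x p z"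
  unfolding metric_between_def by (smt (verit) dist_triangle)

lemma is_segmentE:
  assumes "is_segment X x y S"
  obtains \<gamma> where "\<gamma> ` {0..dist x y} = S" "\<gamma> 0 = x" "\<gamma> (dist x y) = y"
    "\<forall>s\<in>{0..dist x y}. dist x (\<gamma> s) = s"
    "\<forall>s\<in>{0..dist x y}. \<forall>t\<in>{0..dist x y}. dist (\<gamma> s) (\<gamma> t) = \<bar>s - t\<bar>"
proof -
  obtain \<gamma> where \<gamma>: "\<gamma> ` {0..dist x y} = S" "\<gamma> 0 = x" "\<gamma> (dist x y) = y"
    "\<forall>s\<in>{0..dist x y}. \<forall>t\<in>{0..dist x y}. dist (\<gamma> s) (\<gamma> t) = \<bar>s - t\<bar>"
    using assms unfolding is_segment_def by blast
  moreover have "\<forall>s\<in>{0..dist x y}. dist x (\<gamma> s) = s"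
    using \<gamma>(2,4) by (metis abs_of_nonneg atLeastAtMost_iff diff_zero dist_commute order_refl zero_le_dist)
  ultimately show ?thesis using that by blast
qed

lemma is_segment_subset: "is_segment X x y S \<Longrightarrow> S \<subseteq> X"
  unfolding is_segment_def by blast

lemma is_segment_endpoints:
  assumes "is_segment X x y S"
  shows "x \<in> S" "y \<in> S"
proof -
  obtain \<gamma> where "\<gamma> ` {0..dist x y} = S" "\<gamma> 0 = x" "\<gamma> (dist x y) = y"
    using assms by (rule is_segmentE)
  then show "x \<in> S" "y \<in> S" by (force, metis atLeastAtMost_iff image_eqI order_refl zero_le_dist)
qed

lemma is_segment_dist_from_start:
  assumes "is_segment X x y S" "p \<in> S" "q \<in> S"
  shows "dist p q = \<bar>dist x p - dist x q\<bar>"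
proof -
  obtain \<gamma> where \<gamma>: "\<gamma> ` {0..dist x y} = S" "\<forall>s\<in>{0..dist x y}. dist x (\<gamma> s) = s"
    "\<forall>s\<in>{0..dist x y}. \<forall>t\<in>{0..dist x y}. dist (\<gamma> s) (\<gamma> t) = \<bar>s - t\<bar>"
    using assms(1) by (rule is_segmentE)
  obtain s t where "s \<in> {0..dist x y}" "t \<in> {0..dist x y}" "p = \<gamma> s" "q = \<gamma> t"
    using \<gamma>(1) assms(2,3) by blast
  then show ?thesis using \<gamma>(2,3) by simp
qed

lemma is_segment_between:
  assumes "is_segment X x y S" "p \<in> S"
  shows "metric_between x p y"
proof -
  obtain \<gamma> where \<gamma>: "\<gamma> ` {0..dist x y} = S" "\<forall>s\<in>{0..dist x y}. dist x (\<gamma> s) = s"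
    using assms(1) by (rule is_segmentE)
  then have "dist x p \<le> dist x y" using assms(2) by auto
  moreover have "dist p y = \<bar>dist x p - dist x y\<bar>"
    using is_segment_dist_from_start[OF assms is_segment_endpoints(2)[OF assms(1)]] .
  ultimately show ?thesis unfolding metric_between_def by simp
qed

lemma is_segment_compact_connected:
  assumes "is_segment X x y S"
  shows "compact S" "connected S"
proof -
  obtain \<gamma> where \<gamma>: "\<gamma> ` {0..dist x y} = S"
    "\<forall>s\<in>{0..dist x y}. \<forall>t\<in>{0..dist x y}. dist (\<gamma> s) (\<gamma> t) = \<bar>s - t\<bar>"
    using assms by (rule is_segmentE)
  have "continuous_on {0..dist x y} \<gamma>"
    unfolding continuous_on_iff by (metis \<gamma>(2) dist_real_def)
  then show "compact S" "connected S"
    using compact_continuous_image connected_continuous_image \<gamma>(1) by fastforce+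
qed

lemma R_tree_segment_exists:
  assumes "R_tree X" "x \<in> X" "y \<in> X"
  obtains S where "is_segment X x y S"
  using assms unfolding R_tree_def by metis

lemma R_tree_segment_subset_union:
  assumes "R_tree X" "x \<in> X" "y \<in> X" "z \<in> X"
    "is_segment X x y S1" "is_segment X y z S2" "is_segment X x z S3"
  shows "S3 \<subseteq> S1 \<union> S2"
  using assms unfolding R_tree_def by meson

lemma R_tree_segments_common_point:
  assumes T: "R_tree X" and xyz: "x \<in> X" "y \<in> X" "z \<in> X"
    and S1: "is_segment X x y S1" and S2: "is_segment X y z S2" and S: "is_segment X x z S"
  shows "S1 \<inter> S2 \<inter> S \<noteq> {}"
proof -
  have "S \<subseteq> S1 \<union> S2" using R_tree_segment_subset_union[OF T xyz S1 S2 S] .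
  moreover have "closed S1" "closed S2"
    using is_segment_compact_connected(1)[OF S1] is_segment_compact_connected(1)[OF S2]
    by (auto intro: compact_imp_closed)
  moreover have "S1 \<inter> S \<noteq> {}" "S2 \<inter> S \<noteq> {}"
    using is_segment_endpoints[OF S1] is_segment_endpoints[OF S2] is_segment_endpoints[OF S] by auto
  ultimately show ?thesis
    using is_segment_compact_connected(2)[OF S] unfolding connected_closed by blast
qed

lemma R_tree_between_imp_in_segment:
  assumes T: "R_tree X" and xyp: "x \<in> X" "y \<in> X" "p \<in> X"
    and S: "is_segment X x y S" and B: "metric_between x p y"
  shows "p \<in> S"
proof -
  obtain S1 where S1: "is_segment X x p S1" using R_tree_segment_exists[OF T] xyp by metis
  obtain S2 where S2: "is_segment X p y S2" using R_tree_segment_exists[OF T] xyp by metis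
  obtain q where q: "q \<in> S1" "q \<in> S2" "q \<in> S"
    using R_tree_segments_common_point[OF T xyp(1,3,2) S1 S2 S] by blast
  have "metric_between x q p" "metric_between p q y"
    using is_segment_between[OF S1 q(1)] is_segment_between[OF S2 q(2)] .
  then have "q = p" using B dist_triangle[of x y q] unfolding metric_between_def
    by (smt (verit) dist_commute zero_less_dist_iff)
  then show ?thesis using q(3) by simp
qed

lemma R_tree_tripod:
  assumes T: "R_tree X" and pts: "x \<in> X" "a \<in> X" "b \<in> X"
  obtains c where "c \<in> X" "metric_between a c b" "metric_between a c x" "metric_between x c b"
proof -
  obtain S where S: "is_segment X a b S" using R_tree_segment_exists[OF T] pts by metis
  obtain S1 where S1: "is_segment X a x S1" using R_tree_segment_exists[OF T] pts by metis
  obtain S2 where S2: "is_segment X x b S2" using R_tree_segment_exists[OF T] pts by metis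
  obtain c where "c \<in> S1" "c \<in> S2" "c \<in> S"
    using R_tree_segments_common_point[OF T pts(2,1,3) S1 S2 S] by blast
  then show ?thesis
    using that is_segment_between[OF S] is_segment_between[OF S1] is_segment_between[OF S2]
      is_segment_subset[OF S] by blast
qed

lemma R_tree_between_dist:
  assumes T: "R_tree X" and pts: "a \<in> X" "b \<in> X" "p \<in> X" "q \<in> X"
    and "metric_between a p b" "metric_between a q b"
  shows "dist p q = \<bar>dist a p - dist a q\<bar>"
proof -
  obtain S where S: "is_segment X a b S" using R_tree_segment_exists[OF T] pts by metis
  have "p \<in> S" "q \<in> S" using R_tree_between_imp_in_segment[OF T _ _ _ S] pts assms(6,7) by auto
  then show ?thesis by (rule is_segment_dist_from_start[OF S])
qed

definition leaf :: "'a::metric_space set \<Rightarrow> 'a \<Rightarrow> bool" where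
  "leaf X x \<longleftrightarrow> x \<in> X \<and> \<not> (\<exists>a\<in>X. \<exists>b\<in>X. metric_between a x b \<and> x \<noteq> a \<and> x \<noteq> b)"

lemma leaf_between_imp_endpoint:
  "leaf X x \<Longrightarrow> a \<in> X \<Longrightarrow> b \<in> X \<Longrightarrow> metric_between a x b \<Longrightarrow> x = a \<or> x = b"
  unfolding leaf_def by blast

lemma skeleton_imp_strictly_between:
  assumes "p \<in> skeleton X"
  obtains a b where "p \<in> X" "a \<in> X" "b \<in> X" "metric_between a p b" "p \<noteq> a" "p \<noteq> b"
proof -
  obtain x y S where "x \<in> X" "y \<in> X" "is_segment X x y S" "p \<in> S" "p \<noteq> x" "p \<noteq> y"
    using assms unfolding skeleton_def by blast
  then show ?thesis using that is_segment_between is_segment_subset by blast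
qed

text \<open>The tripod centre of \<open>r, a, b\<close> lies on \<open>[a, b]\<close>; going from it towards \<open>p\<close> and on to
  whichever endpoint lies beyond \<open>p\<close> leads from \<open>r\<close> through \<open>p\<close> to a point other than \<open>p\<close>.\<close>

lemma R_tree_extend_beyond:
  assumes T: "R_tree X" and pts: "r \<in> X" "a \<in> X" "b \<in> X" "p \<in> X"
    and B: "metric_between a p b" and "p \<noteq> a" "p \<noteq> b"
  obtains y where "y \<in> X" "metric_between r p y" "y \<noteq> p"
proof -
  obtain c where c: "c \<in> X" "metric_between a c b" "metric_between a c r" "metric_between r c b"
    using R_tree_tripod[OF T pts(1,2,3)] by blast
  have dist_cp: "dist c p = \<bar>dist a c - dist a p\<bar>"
    using R_tree_between_dist[OF T pts(2,3) c(1) pts(4) c(2) B] .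
  show ?thesis
  proof (cases "dist a c \<le> dist a p")
    case True
    then have "metric_between c p b" using dist_cp B c(2) unfolding metric_between_def by linarith
    then have "metric_between r p b" using metric_between_trans_right[OF c(4)] by blast
    then show ?thesis using that pts \<open>p \<noteq> b\<close> by blast
  next
    case False
    then have "metric_between c p a" using dist_cp B c(2) unfolding metric_between_def by (simp add: dist_commute)
    then have "metric_between r p a" using metric_between_trans_right metric_between_sym[OF c(3)] by blast
    then show ?thesis using that pts \<open>p \<noteq> a\<close> by blast
  qed
qed

text \<open>A point of \<open>X\<close> beyond \<open>p\<close> as seen from \<open>r\<close> and farthest from \<open>r\<close> (it exists by
  compactness) cannot be extended further, hence is a leaf.\<close>

lemma R_tree_extend_to_leaf:
  assumes T: "R_tree X" and K: "compact X" and r: "r \<in> X" and p: "p \<in> skeleton X"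
  obtains y where "leaf X y" "metric_between r p y"
proof -
  obtain a b where ab: "p \<in> X" "a \<in> X" "b \<in> X" "metric_between a p b" "p \<noteq> a" "p \<noteq> b"
    using skeleton_imp_strictly_between[OF p] by blast
  define beyond where "beyond = X \<inter> {y. metric_between r p y}"
  have "compact beyond" unfolding beyond_def metric_between_def
    using K by (intro compact_Int_closed closed_Collect_eq continuous_intros)
  moreover obtain y0 where "y0 \<in> X" "metric_between r p y0"
    using R_tree_extend_beyond[OF T r ab(2,3,1,4,5,6)] by blast
  then have "beyond \<noteq> {}" unfolding beyond_def by blast
  moreover have "continuous_on beyond (dist r)" by (intro continuous_intros)
  ultimately obtain y where y: "y \<in> beyond" "\<And>z. z \<in> beyond \<Longrightarrow> dist r z \<le> dist r y"
    using continuous_attains_sup[of beyond "dist r"] by blast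
  have y_between: "y \<in> X" "metric_between r p y" using y(1) unfolding beyond_def by auto
  have "leaf X y"
    unfolding leaf_def
  proof (intro conjI notI y_between(1))
    assume "\<exists>a\<in>X. \<exists>b\<in>X. metric_between a y b \<and> y \<noteq> a \<and> y \<noteq> b"
    then obtain a' b' where "a' \<in> X" "b' \<in> X" "metric_between a' y b'" "y \<noteq> a'" "y \<noteq> b'"
      by blast
    then obtain y1 where y1: "y1 \<in> X" "metric_between r y y1" "y1 \<noteq> y"
      using R_tree_extend_beyond[OF T r _ _ y_between(1)] by blast
    then have "y1 \<in> beyond"
      using metric_between_trans_left[OF y1(2) y_between(2)] unfolding beyond_def by auto
    then have "dist r y1 \<le> dist r y" by (rule y(2))
    moreover have "dist r y1 = dist r y + dist y y1" using y1(2) unfolding metric_between_def by simp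
    ultimately show False using y1(3) by simp
  qed
  then show ?thesis using that y_between by blast
qed

text \<open>The branch point of a leaf \<open>x\<close> is the point of \<open>[x, x1]\<close> closest to \<open>x\<close> among the tripod
  centres of \<open>x, x1, z\<close>, where \<open>x1\<close> is another leaf and \<open>z\<close> ranges over the remaining ones.\<close>

lemma R_tree_leaves_branch_point:
  assumes T: "R_tree X" and F: "finite F" "F \<subseteq> Collect (leaf X)" "2 \<le> card F" and x: "x \<in> F"
  obtains b where "b \<in> X" "b \<noteq> x" "\<forall>z\<in>F - {x}. metric_between x b z"
proof -
  have FX: "F \<subseteq> X" using F(2) unfolding leaf_def by blast
  have "\<not> F \<subseteq> {x}" using F(3) card_mono[of "{x}" F] by auto
  then obtain x1 where x1: "x1 \<in> F" "x1 \<noteq> x" by blast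
  have "\<exists>c. c \<in> X \<and> metric_between x c z \<and> metric_between x c x1 \<and> c \<noteq> x" if z: "z \<in> F - {x}" for z
  proof -
    obtain c where c: "c \<in> X" "metric_between x c z" "metric_between x c x1" "metric_between x1 c z"
      using R_tree_tripod[OF T, of x1 x z] FX x x1 z by blast
    have "leaf X x" "x1 \<in> X" "z \<in> X" using F(2) FX x x1(1) z by auto
    then have "c \<noteq> x" using leaf_between_imp_endpoint c(4) x1(2) z by blast
    then show ?thesis using c by blast
  qed
  then obtain centre where centre: "\<And>z. z \<in> F - {x} \<Longrightarrow>
      centre z \<in> X \<and> metric_between x (centre z) z \<and> metric_between x (centre z) x1 \<and> centre z \<noteq> x"
    by metis
  obtain z0 where z0: "z0 \<in> F - {x}" "\<And>z. z \<in> F - {x} \<Longrightarrow> dist x (centre z0) \<le> dist x (centre z)"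
    using ex_is_arg_min_if_finite[of "F - {x}" "\<lambda>z. dist x (centre z)"] F(1) x1
    unfolding is_arg_min_linorder by blast
  show ?thesis
  proof (rule that)
    show "centre z0 \<in> X" "centre z0 \<noteq> x" using centre[OF z0(1)] by auto
    show "\<forall>z\<in>F - {x}. metric_between x (centre z0) z"
    proof
      fix z assume z: "z \<in> F - {x}"
      have "dist (centre z0) (centre z) = \<bar>dist x (centre z0) - dist x (centre z)\<bar>"
        using R_tree_between_dist[OF T] FX x x1 centre[OF z0(1)] centre[OF z] by blast
      then have "metric_between x (centre z0) (centre z)"
        using z0(2)[OF z] unfolding metric_between_def by simp
      then show "metric_between x (centre z0) z" using metric_between_trans_left centre[OF z] by blast
    qed
  qed
qed

lemma R_tree_leaves_branch_map:
  assumes "R_tree X" "finite F" "F \<subseteq> Collect (leaf X)" "2 \<le> card F"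
  obtains bf where "\<forall>x\<in>F. bf x \<in> X \<and> bf x \<noteq> x \<and> (\<forall>z\<in>F - {x}. metric_between x (bf x) z)"
proof -
  have "\<forall>x\<in>F. \<exists>b. b \<in> X \<and> b \<noteq> x \<and> (\<forall>z\<in>F - {x}. metric_between x b z)"
    using R_tree_leaves_branch_point[OF assms] by (metis (no_types, lifting))
  then show ?thesis using that by (rule bchoice[THEN exE])
qed

section \<open>Length of the skeleton\<close>

lemma diameter_le_dist_bound:
  fixes S :: "'a::metric_space set"
  assumes "0 \<le> d" "\<And>x y. x \<in> S \<Longrightarrow> y \<in> S \<Longrightarrow> dist x y \<le> d"
  shows "diameter S \<le> d"
  using assms unfolding diameter_def by (auto intro: cSUP_least)

lemma hausdorff1_delta_le_finite_cover:
  fixes A :: "'a::metric_space set" and C :: "'j \<Rightarrow> 'a set"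
  assumes J: "finite J" and cover: "A \<subseteq> (\<Union>j\<in>J. C j)"
    and C: "\<And>j. j \<in> J \<Longrightarrow> bounded (C j) \<and> diameter (C j) \<le> \<delta>" and "0 \<le> \<delta>"
  shows "hausdorff1_delta \<delta> A \<le> ennreal (\<Sum>j\<in>J. diameter (C j))"
proof -
  obtain h where h: "bij_betw h {..<card J} J"
    using ex_bij_betw_nat_finite[OF J] by (auto simp: atLeast0LessThan)
  define C' where "C' i = (if i < card J then C (h i) else {})" for i
  have "A \<subseteq> (\<Union>i. C' i)"
    using cover h unfolding C'_def bij_betw_def by force
  moreover have "bounded (C' i) \<and> diameter (C' i) \<le> \<delta>" for i
    using C h \<open>0 \<le> \<delta>\<close> unfolding C'_def bij_betw_def by auto
  ultimately have "hausdorff1_delta \<delta> A \<le> (\<Sum>i. ennreal (diameter (C' i)))"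
    unfolding hausdorff1_delta_def by (intro INF_lower) blast
  also have "\<dots> = (\<Sum>i<card J. ennreal (diameter (C' i)))"
    by (rule suminf_finite) (auto simp: C'_def)
  also have "\<dots> = (\<Sum>i<card J. ennreal (diameter (C (h i))))"
    by (simp add: C'_def)
  also have "\<dots> = ennreal (\<Sum>i<card J. diameter (C (h i)))"
    using C h by (intro sum_ennreal) (auto simp: bij_betw_def intro: diameter_ge_0)
  also have "(\<Sum>i<card J. diameter (C (h i))) = (\<Sum>j\<in>J. diameter (C j))"
    using sum.reindex_bij_betw[OF h] .
  finally show ?thesis .
qed

lemma hausdorff1_finite_if_finite_covers:
  fixes A :: "'a::metric_space set"
  assumes "\<And>\<delta>. \<delta> > 0 \<Longrightarrow> \<exists>J (C :: 'j \<Rightarrow> 'a set). finite J \<and> A \<subseteq> (\<Union>j\<in>J. C j) \<and>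
      (\<forall>j\<in>J. bounded (C j) \<and> diameter (C j) \<le> \<delta>) \<and> (\<Sum>j\<in>J. diameter (C j)) \<le> B"
  shows "hausdorff1 A \<noteq> \<infinity>"
proof -
  have "hausdorff1_delta \<delta> A \<le> ennreal B" if \<delta>: "\<delta> > 0" for \<delta>
  proof -
    obtain J and C :: "'j \<Rightarrow> 'a set" where JC: "finite J" "A \<subseteq> (\<Union>j\<in>J. C j)"
      "\<And>j. j \<in> J \<Longrightarrow> bounded (C j) \<and> diameter (C j) \<le> \<delta>" "(\<Sum>j\<in>J. diameter (C j)) \<le> B"
      using assms[OF \<delta>] by blast
    have "hausdorff1_delta \<delta> A \<le> ennreal (\<Sum>j\<in>J. diameter (C j))"
      using JC(1-3) \<delta> by (intro hausdorff1_delta_le_finite_cover) auto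
    also have "\<dots> \<le> ennreal B" using JC(4) by (rule ennreal_leI)
    finally show ?thesis .
  qed
  then have "hausdorff1 A \<le> ennreal B" unfolding hausdorff1_def by (auto intro: SUP_least)
  then show ?thesis using ennreal_less_top[of B] by (auto simp: top_unique)
qed

lemma ex_grid_cell:
  fixes D s :: real and N :: nat
  assumes "0 \<le> s" "s < D" "0 < N"
  obtains j where "j < N" "D * j / N \<le> s" "s \<le> D * j / N + D / N"
proof
  define j where "j = nat \<lfloor>s * N / D\<rfloor>"
  have "0 \<le> s * N / D" "s * N / D < N" using assms by (auto simp: field_simps)
  then have "j < N" "real j \<le> s * N / D" "s * N / D < real j + 1"
    unfolding j_def by (auto simp: nat_less_iff floor_less_iff)
  then show "j < N" "D * j / N \<le> s" "s \<le> D * j / N + D / N"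
    using assms by (auto simp: field_simps)
qed

definition geodesic_slice :: "'a::metric_space set \<Rightarrow> 'a \<Rightarrow> 'a \<Rightarrow> real \<Rightarrow> real \<Rightarrow> 'a set" where
  "geodesic_slice X r y a h = {q \<in> X. metric_between r q y \<and> a \<le> dist r q \<and> dist r q \<le> a + h}"

lemma R_tree_geodesic_slice_small:
  assumes T: "R_tree X" and "r \<in> X" "y \<in> X" "0 \<le> h"
  shows "bounded (geodesic_slice X r y a h)" "diameter (geodesic_slice X r y a h) \<le> h"
proof -
  have "geodesic_slice X r y a h \<subseteq> cball r (a + h)" unfolding geodesic_slice_def by auto
  then show "bounded (geodesic_slice X r y a h)" using bounded_subset[OF bounded_cball] by blast
  show "diameter (geodesic_slice X r y a h) \<le> h"
  proof (rule diameter_le_dist_bound[OF \<open>0 \<le> h\<close>])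
    fix p q assume "p \<in> geodesic_slice X r y a h" "q \<in> geodesic_slice X r y a h"
    then show "dist p q \<le> h"
      using R_tree_between_dist[OF T \<open>r \<in> X\<close> \<open>y \<in> X\<close>, of p q] unfolding geodesic_slice_def by auto
  qed
qed

lemma geodesic_slices_cover:
  fixes N :: nat
  assumes "p \<in> X" "metric_between r p y" "dist r y < D" "0 < N"
  obtains j :: nat where "j < N" "p \<in> geodesic_slice X r y (D * j / N) (D / N)"
proof -
  have "dist r p < D" using assms(2,3) zero_le_dist[of p y] unfolding metric_between_def by linarith
  then obtain j where "j < N" "D * j / N \<le> dist r p" "dist r p \<le> D * j / N + D / N"
    by (rule ex_grid_cell[OF zero_le_dist _ \<open>0 < N\<close>])
  then show ?thesis using that assms(1,2) unfolding geodesic_slice_def by blast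
qed

text \<open>Cut each geodesic \<open>[r, y]\<close> into \<open>N\<close> slices of length \<open>D / N\<close> by the distance to \<open>r\<close>;
  the total diameter of all slices is at most \<open>card L * D\<close>, independently of \<open>N\<close>.\<close>

lemma R_tree_hausdorff1_geodesics_finite:
  assumes T: "R_tree X" and r: "r \<in> X" and L: "finite L" "L \<subseteq> X"
    and S: "S \<subseteq> {p \<in> X. \<exists>y\<in>L. metric_between r p y}"
  shows "hausdorff1 S \<noteq> \<infinity>"
proof (rule hausdorff1_finite_if_finite_covers)
  define D where "D = (\<Sum>y\<in>L. dist r y) + 1"
  have dist_less_D: "dist r y < D" if "y \<in> L" for y
    using member_le_sum[of y L "dist r"] that L(1) unfolding D_def by simp
  have "(\<Sum>y\<in>L. dist r y) \<ge> 0" by (simp add: sum_nonneg)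
  then have "D > 0" unfolding D_def by linarith
  fix \<delta> :: real assume "\<delta> > 0"
  define N where "N = nat \<lceil>D / \<delta>\<rceil> + 1"
  have "N > 0" unfolding N_def by simp
  have "D / \<delta> < N" unfolding N_def using real_nat_ceiling_ge[of "D / \<delta>"] by simp
  then have "D / N \<le> \<delta>" using \<open>\<delta> > 0\<close> \<open>N > 0\<close> by (simp add: field_simps)
  define slice where "slice = (\<lambda>(y, j::nat). geodesic_slice X r y (D * j / N) (D / N))"
  have cover: "S \<subseteq> (\<Union>yj\<in>L \<times> {..<N}. slice yj)"
  proof
    fix p assume "p \<in> S"
    then obtain y where y: "p \<in> X" "y \<in> L" "metric_between r p y" using S by blast
    then obtain j where "j < N" "p \<in> slice (y, j)"
      using geodesic_slices_cover[OF y(1,3) dist_less_D[OF y(2)] \<open>N > 0\<close>] unfolding slice_def by auto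
    then show "p \<in> (\<Union>yj\<in>L \<times> {..<N}. slice yj)" using y(2) by blast
  qed
  have small: "bounded (slice yj)" "diameter (slice yj) \<le> D / N" if "yj \<in> L \<times> {..<N}" for yj
    using that L(2) R_tree_geodesic_slice_small[OF T r] \<open>D > 0\<close> unfolding slice_def by auto
  have "(\<Sum>yj\<in>L \<times> {..<N}. diameter (slice yj)) \<le> (\<Sum>yj\<in>L \<times> {..<N}. D / N)"
    using small(2) by (rule sum_mono)
  also have "\<dots> = card L * D" using \<open>N > 0\<close> by (simp add: card_cartesian_product)
  finally have total: "(\<Sum>yj\<in>L \<times> {..<N}. diameter (slice yj)) \<le> card L * D" .
  show "\<exists>J (C :: 'a \<times> nat \<Rightarrow> 'a set). finite J \<and> S \<subseteq> (\<Union>j\<in>J. C j) \<and>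
      (\<forall>j\<in>J. bounded (C j) \<and> diameter (C j) \<le> \<delta>) \<and> (\<Sum>j\<in>J. diameter (C j)) \<le> card L * D"
  proof (intro exI conjI)
    show "finite (L \<times> {..<N})" using L(1) by simp
    show "\<forall>j\<in>L \<times> {..<N}. bounded (slice j) \<and> diameter (slice j) \<le> \<delta>"
      using small \<open>D / N \<le> \<delta>\<close> by (meson order_trans)
  qed (fact cover total)+
qed

lemma R_tree_hausdorff1_skeleton_finite:
  assumes K: "compact X" and T: "R_tree X" and leaves: "finite (Collect (leaf X))"
  shows "hausdorff1 (skeleton X) \<noteq> \<infinity>"
proof (cases "skeleton X = {}")
  case True
  have "\<exists>J (C :: nat \<Rightarrow> 'a set). finite J \<and> skeleton X \<subseteq> (\<Union>j\<in>J. C j) \<and>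
      (\<forall>j\<in>J. bounded (C j) \<and> diameter (C j) \<le> \<delta>) \<and> (\<Sum>j\<in>J. diameter (C j)) \<le> 0" for \<delta>
    using True by (intro exI[of _ "{}"]) simp
  then show ?thesis by (rule hausdorff1_finite_if_finite_covers)
next
  case False
  then obtain r where "r \<in> skeleton X" by blast
  then have r: "r \<in> X" by (rule skeleton_imp_strictly_between)
  have "skeleton X \<subseteq> {p \<in> X. \<exists>y\<in>Collect (leaf X). metric_between r p y}"
  proof
    fix p assume p: "p \<in> skeleton X"
    obtain y where "leaf X y" "metric_between r p y" by (rule R_tree_extend_to_leaf[OF T K r p])
    moreover have "p \<in> X" using p by (rule skeleton_imp_strictly_between)
    ultimately show "p \<in> {p \<in> X. \<exists>y\<in>Collect (leaf X). metric_between r p y}" by blast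
  qed
  moreover have "Collect (leaf X) \<subseteq> X" unfolding leaf_def by blast
  ultimately show ?thesis using R_tree_hausdorff1_geodesics_finite[OF T r leaves] by blast
qed

section \<open>Finite-dimensional subspaces of \<open>L\<^sup>1\<close>\<close>

text \<open>An element of the span of the \<open>g i\<close>, \<open>i \<in> I\<close>, is given by a coefficient vector
  \<open>c :: 'i \<Rightarrow> real\<close>, of which only the values on \<open>I\<close> matter.\<close>

definition lin_comb :: "('i \<Rightarrow> 'b \<Rightarrow> real) \<Rightarrow> 'i set \<Rightarrow> ('i \<Rightarrow> real) \<Rightarrow> 'b \<Rightarrow> real" where
  "lin_comb g I c = (\<lambda>t. \<Sum>i\<in>I. c i * g i t)"

definition comb_norm :: "'b measure \<Rightarrow> ('i \<Rightarrow> 'b \<Rightarrow> real) \<Rightarrow> 'i set \<Rightarrow> ('i \<Rightarrow> real) \<Rightarrow> real" where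
  "comb_norm M g I c = (\<integral>t. \<bar>lin_comb g I c t\<bar> \<partial>M)"

lemma lin_comb_diff: "lin_comb g I (a - b) t = lin_comb g I a t - lin_comb g I b t"
  unfolding lin_comb_def by (simp add: sum_subtractf algebra_simps)

lemma lin_comb_divide: "lin_comb g I (\<lambda>i. c i / s) t = lin_comb g I c t / s"
  unfolding lin_comb_def by (simp add: sum_divide_distrib)

lemma integrable_lin_comb: "\<forall>i\<in>I. integrable M (g i) \<Longrightarrow> integrable M (lin_comb g I c)"
  unfolding lin_comb_def by (intro Bochner_Integration.integrable_sum integrable_mult_right) auto

lemma comb_norm_nonneg: "0 \<le> comb_norm M g I c"
  unfolding comb_norm_def by simp

lemma comb_norm_divide: "s > 0 \<Longrightarrow> comb_norm M g I (\<lambda>i. c i / s) = comb_norm M g I c / s"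
  unfolding comb_norm_def lin_comb_divide by simp

lemma comb_norm_le_sum:
  assumes "\<forall>i\<in>I. integrable M (g i)"
  shows "comb_norm M g I c \<le> (\<Sum>i\<in>I. \<bar>c i\<bar> * (\<integral>t. \<bar>g i t\<bar> \<partial>M))"
proof -
  have "comb_norm M g I c \<le> (\<integral>t. (\<Sum>i\<in>I. \<bar>c i\<bar> * \<bar>g i t\<bar>) \<partial>M)"
    unfolding comb_norm_def
  proof (rule integral_mono)
    show "integrable M (\<lambda>t. \<bar>lin_comb g I c t\<bar>)" using integrable_lin_comb[OF assms] by auto
    show "integrable M (\<lambda>t. \<Sum>i\<in>I. \<bar>c i\<bar> * \<bar>g i t\<bar>)"
      using assms by (intro Bochner_Integration.integrable_sum integrable_mult_right integrable_abs) auto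
    show "\<bar>lin_comb g I c t\<bar> \<le> (\<Sum>i\<in>I. \<bar>c i\<bar> * \<bar>g i t\<bar>)" for t
      unfolding lin_comb_def by (rule order_trans[OF sum_abs]) (simp add: abs_mult)
  qed
  also have "\<dots> = (\<Sum>i\<in>I. \<bar>c i\<bar> * (\<integral>t. \<bar>g i t\<bar> \<partial>M))"
    using assms by (subst Bochner_Integration.integral_sum) (auto intro!: integrable_mult_right)
  finally show ?thesis .
qed

lemma comb_norm_triangle:
  assumes "\<forall>i\<in>I. integrable M (g i)"
  shows "comb_norm M g I a \<le> comb_norm M g I b + comb_norm M g I (a - b)"
proof -
  have "lin_comb g I a t = lin_comb g I b t + lin_comb g I (a - b) t" for t
    by (simp add: lin_comb_diff)
  then have "comb_norm M g I a \<le> (\<integral>t. \<bar>lin_comb g I b t\<bar> + \<bar>lin_comb g I (a - b) t\<bar> \<partial>M)"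
    unfolding comb_norm_def using integrable_lin_comb[OF assms]
    by (intro integral_mono) (auto intro!: integrable_abs)
  also have "\<dots> = comb_norm M g I b + comb_norm M g I (a - b)"
    unfolding comb_norm_def using integrable_lin_comb[OF assms] by (simp add: integrable_abs)
  finally show ?thesis .
qed

lemma comb_norm_eq_0_imp_AE:
  assumes "\<forall>i\<in>I. integrable M (g i)" "comb_norm M g I c = 0"
  shows "AE t in M. lin_comb g I c t = 0"
  using assms(2) integral_nonneg_eq_0_iff_AE[of M "\<lambda>t. \<bar>lin_comb g I c t\<bar>"] integrable_lin_comb[OF assms(1)]
  unfolding comb_norm_def by auto

lemma comb_norm_eq_integral_if_AE:
  assumes "\<forall>i\<in>I. integrable M (g i)" "h \<in> borel_measurable M" "AE t in M. lin_comb g I c t = h t"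
  shows "comb_norm M g I c = (\<integral>t. \<bar>h t\<bar> \<partial>M)"
  unfolding comb_norm_def using assms integrable_lin_comb[OF assms(1)] by (intro integral_cong_AE) auto

lemma comb_norm_diff_eq_integral_if_AE:
  assumes ig: "\<forall>i\<in>I. integrable M (g i)" and "h \<in> borel_measurable M" "k \<in> borel_measurable M"
    and "AE t in M. lin_comb g I c t = h t" "AE t in M. lin_comb g I d t = k t"
  shows "comb_norm M g I (c - d) = (\<integral>t. \<bar>h t - k t\<bar> \<partial>M)"
proof (rule comb_norm_eq_integral_if_AE[OF ig])
  show "(\<lambda>t. h t - k t) \<in> borel_measurable M" using assms(2,3) by measurable
  show "AE t in M. lin_comb g I (c - d) t = h t - k t"
    using assms(4,5) by eventually_elim (simp add: lin_comb_diff)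
qed

lemma finite_coordinates_convergent_subseq:
  fixes x :: "nat \<Rightarrow> 'i \<Rightarrow> real"
  assumes "finite I" "\<And>k i. i \<in> I \<Longrightarrow> \<bar>x k i\<bar> \<le> 1"
  obtains r l where "strict_mono r" "\<And>i. i \<in> I \<Longrightarrow> (\<lambda>k. x (r k) i) \<longlonglongrightarrow> l i"
proof -
  have "\<exists>r l. strict_mono r \<and> (\<forall>i\<in>I. (\<lambda>k. x (r k) i) \<longlonglongrightarrow> l i)"
    using assms
  proof (induction I rule: finite_induct)
    case empty
    show ?case by (intro exI[of _ id]) (auto simp: strict_mono_def)
  next
    case (insert j I)
    obtain r l where r: "strict_mono r" "\<forall>i\<in>I. (\<lambda>k. x (r k) i) \<longlonglongrightarrow> l i"
      using insert by blast
    have "bounded (range (\<lambda>k. x (r k) j))"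
      using insert(4)[of j] unfolding bounded_iff by auto
    then obtain lj r' where r': "strict_mono r'" "((\<lambda>k. x (r k) j) \<circ> r') \<longlonglongrightarrow> lj"
      using bounded_imp_convergent_subsequence by blast
    have "(\<lambda>k. x ((r \<circ> r') k) i) \<longlonglongrightarrow> (l(j := lj)) i" if "i \<in> insert j I" for i
    proof (cases "i = j")
      case True
      then show ?thesis using r'(2) by (simp add: o_def)
    next
      case False
      then have "((\<lambda>k. x (r k) i) \<circ> r') \<longlonglongrightarrow> l i"
        using that r(2) LIMSEQ_subseq_LIMSEQ r'(1) by blast
      then show ?thesis using False by (simp add: o_def)
    qed
    moreover have "strict_mono (r \<circ> r')" using r(1) r'(1) by (simp add: strict_mono_o)
    ultimately show ?case by blast
  qed
  then show ?thesis using that by blast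
qed

lemma tendsto_comb_norm:
  assumes ig: "\<forall>i\<in>I. integrable M (g i)" and d: "\<And>i. i \<in> I \<Longrightarrow> (\<lambda>k. d k i) \<longlonglongrightarrow> l i"
  shows "(\<lambda>k. comb_norm M g I (d k)) \<longlonglongrightarrow> comb_norm M g I l"
proof (rule LIM_zero_cancel, rule Lim_null_comparison)
  define bound where "bound k = (\<Sum>i\<in>I. \<bar>d k i - l i\<bar> * (\<integral>t. \<bar>g i t\<bar> \<partial>M))" for k
  have "norm (comb_norm M g I (d k) - comb_norm M g I l) \<le> bound k" for k
  proof -
    have "comb_norm M g I (d k - l) \<le> bound k" "comb_norm M g I (l - d k) \<le> bound k"
      using comb_norm_le_sum[OF ig, of "d k - l"] comb_norm_le_sum[OF ig, of "l - d k"]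
      unfolding bound_def by (simp_all add: abs_minus_commute)
    moreover have "comb_norm M g I (d k) \<le> comb_norm M g I l + comb_norm M g I (d k - l)"
      "comb_norm M g I l \<le> comb_norm M g I (d k) + comb_norm M g I (l - d k)"
      using comb_norm_triangle[OF ig, of "d k" l]
        comb_norm_triangle[OF ig, of l "d k"] by auto
    ultimately show ?thesis unfolding real_norm_def abs_le_iff by (intro conjI; linarith)
  qed
  then show "\<forall>\<^sub>F k in sequentially. norm (comb_norm M g I (d k) - comb_norm M g I l) \<le> bound k"
    by (intro always_eventually allI)
  have "bound \<longlonglongrightarrow> (\<Sum>i\<in>I. \<bar>l i - l i\<bar> * (\<integral>t. \<bar>g i t\<bar> \<partial>M))"
    unfolding bound_def by (intro tendsto_intros d)
  then show "bound \<longlonglongrightarrow> 0" by simp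
qed

definition ae_independent :: "'b measure \<Rightarrow> ('i \<Rightarrow> 'b \<Rightarrow> real) \<Rightarrow> 'i set \<Rightarrow> bool" where
  "ae_independent M g I \<longleftrightarrow> (\<forall>a. (AE t in M. lin_comb g I a t = 0) \<longrightarrow> (\<forall>i\<in>I. a i = 0))"

lemma comb_norm_null_limit:
  fixes d :: "nat \<Rightarrow> 'i \<Rightarrow> real"
  assumes fin: "finite I" and ig: "\<forall>i\<in>I. integrable M (g i)"
    and unit: "\<And>k. (\<Sum>i\<in>I. \<bar>d k i\<bar>) = 1" and null: "(\<lambda>k. comb_norm M g I (d k)) \<longlonglongrightarrow> 0"
  obtains l where "(\<Sum>i\<in>I. \<bar>l i\<bar>) = 1" "AE t in M. lin_comb g I l t = 0"
proof -
  have d_le_1: "\<bar>d k i\<bar> \<le> 1" if "i \<in> I" for k i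
    using member_le_sum[of i I "\<lambda>i. \<bar>d k i\<bar>"] that fin unit[of k] by simp
  obtain r l where r: "strict_mono r" "\<And>i. i \<in> I \<Longrightarrow> (\<lambda>k. d (r k) i) \<longlonglongrightarrow> l i"
    using finite_coordinates_convergent_subseq[where x = d, OF fin d_le_1] by metis
  have "(\<lambda>k. \<Sum>i\<in>I. \<bar>d (r k) i\<bar>) \<longlonglongrightarrow> (\<Sum>i\<in>I. \<bar>l i\<bar>)"
    by (intro tendsto_intros r(2))
  then have "(\<Sum>i\<in>I. \<bar>l i\<bar>) = 1" using unit by (simp add: LIMSEQ_const_iff)
  have "(\<lambda>k. comb_norm M g I (d (r k))) \<longlonglongrightarrow> comb_norm M g I l"
    by (rule tendsto_comb_norm[OF ig r(2)])
  moreover have "(\<lambda>k. comb_norm M g I (d (r k))) \<longlonglongrightarrow> 0"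
    using LIMSEQ_subseq_LIMSEQ[OF null r(1)] by (simp add: o_def)
  ultimately have "comb_norm M g I l = 0" by (rule LIMSEQ_unique)
  then show ?thesis using that \<open>(\<Sum>i\<in>I. \<bar>l i\<bar>) = 1\<close> comb_norm_eq_0_imp_AE[OF ig] by blast
qed

lemma comb_norm_pos_on_unit_sphere:
  fixes g :: "'i \<Rightarrow> 'b \<Rightarrow> real"
  assumes fin: "finite I" and ig: "\<forall>i\<in>I. integrable M (g i)" and indep: "ae_independent M g I"
  obtains \<epsilon> where "\<epsilon> > 0" "\<forall>d. (\<Sum>i\<in>I. \<bar>d i\<bar>) = 1 \<longrightarrow> \<epsilon> \<le> comb_norm M g I d"
proof -
  have "\<exists>\<epsilon>>0. \<forall>d. (\<Sum>i\<in>I. \<bar>d i\<bar>) = 1 \<longrightarrow> \<epsilon> \<le> comb_norm M g I d"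
  proof (rule ccontr)
    assume "\<not> ?thesis"
    then have small: "\<forall>\<epsilon>>0. \<exists>d. (\<Sum>i\<in>I. \<bar>d i\<bar>) = 1 \<and> comb_norm M g I d < \<epsilon>"
      by (simp add: not_le)
    have ex: "\<exists>d. (\<Sum>i\<in>I. \<bar>d i\<bar>) = 1 \<and> comb_norm M g I d < 1 / Suc k" for k
      using small[rule_format, of "1 / Suc k"] by simp
    define d where "d k = (SOME d. (\<Sum>i\<in>I. \<bar>d i\<bar>) = 1 \<and> comb_norm M g I d < 1 / Suc k)" for k
    have d: "(\<Sum>i\<in>I. \<bar>d k i\<bar>) = 1 \<and> comb_norm M g I (d k) < 1 / Suc k" for k
      unfolding d_def by (rule someI_ex[OF ex])
    have upper_lim: "(\<lambda>k. 1 / Suc k) \<longlonglongrightarrow> (0::real)"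
      using LIMSEQ_inverse_real_of_nat by (simp add: inverse_eq_divide)
    have upper: "\<forall>\<^sub>F k in sequentially. comb_norm M g I (d k) \<le> 1 / Suc k"
      using d by (intro always_eventually allI less_imp_le) blast
    have lower: "\<forall>\<^sub>F k in sequentially. 0 \<le> comb_norm M g I (d k)"
      by (intro always_eventually allI comb_norm_nonneg)
    have "(\<lambda>k. comb_norm M g I (d k)) \<longlonglongrightarrow> 0"
      by (rule tendsto_sandwich[OF lower upper tendsto_const upper_lim])
    moreover have "(\<Sum>i\<in>I. \<bar>d k i\<bar>) = 1" for k using d by blast
    ultimately obtain l where l: "(\<Sum>i\<in>I. \<bar>l i\<bar>) = 1" "AE t in M. lin_comb g I l t = 0"
      using comb_norm_null_limit[OF fin ig] by metis
    have "\<forall>i\<in>I. l i = 0" using indep l(2) unfolding ae_independent_def by blast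
    then show False using l(1) by simp
  qed
  then show ?thesis using that by blast
qed

lemma comb_norm_lower_bound:
  fixes g :: "'i \<Rightarrow> 'b \<Rightarrow> real"
  assumes fin: "finite I" and ig: "\<forall>i\<in>I. integrable M (g i)" and indep: "ae_independent M g I"
  obtains \<epsilon> where "\<epsilon> > 0" "\<forall>c. \<epsilon> * (\<Sum>i\<in>I. \<bar>c i\<bar>) \<le> comb_norm M g I c"
proof -
  obtain \<epsilon> where \<epsilon>: "\<epsilon> > 0" "\<forall>d. (\<Sum>i\<in>I. \<bar>d i\<bar>) = 1 \<longrightarrow> \<epsilon> \<le> comb_norm M g I d"
    by (rule comb_norm_pos_on_unit_sphere[OF fin ig indep])
  have "\<epsilon> * (\<Sum>i\<in>I. \<bar>c i\<bar>) \<le> comb_norm M g I c" for c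
  proof (cases "(\<Sum>i\<in>I. \<bar>c i\<bar>) = 0")
    case True
    then show ?thesis using comb_norm_nonneg by simp
  next
    case False
    define s where "s = (\<Sum>i\<in>I. \<bar>c i\<bar>)"
    have "s > 0" using False unfolding s_def by (simp add: sum_nonneg order_le_neq_trans)
    have "(\<Sum>i\<in>I. \<bar>c i / s\<bar>) = 1"
      using \<open>s > 0\<close> unfolding s_def by (simp add: sum_divide_distrib[symmetric])
    then have "\<epsilon> \<le> comb_norm M g I (\<lambda>i. c i / s)" by (rule \<epsilon>(2)[rule_format])
    then have "\<epsilon> \<le> comb_norm M g I c / s" using comb_norm_divide[OF \<open>s > 0\<close>, of M g I c] by linarith
    then show ?thesis using \<open>s > 0\<close> unfolding s_def by (simp add: field_simps)
  qed
  then show ?thesis using that \<epsilon>(1) by blast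
qed

lemma comb_norm_le_if_coeffs_le:
  assumes ig: "\<forall>i\<in>I. integrable M (g i)" and c: "\<forall>i\<in>I. \<bar>c i\<bar> \<le> h"
  shows "comb_norm M g I c \<le> h * (\<Sum>i\<in>I. \<integral>t. \<bar>g i t\<bar> \<partial>M)"
proof -
  have "comb_norm M g I c \<le> (\<Sum>i\<in>I. \<bar>c i\<bar> * (\<integral>t. \<bar>g i t\<bar> \<partial>M))" by (rule comb_norm_le_sum[OF ig])
  also have "\<dots> \<le> (\<Sum>i\<in>I. h * (\<integral>t. \<bar>g i t\<bar> \<partial>M))" using c by (intro sum_mono mult_right_mono) auto
  finally show ?thesis by (simp add: sum_distrib_left)
qed

lemma floor_divide_eq_imp_abs_diff_less:
  fixes a b h :: real
  assumes "h > 0" "\<lfloor>a / h\<rfloor> = \<lfloor>b / h\<rfloor>"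
  shows "\<bar>a - b\<bar> < h"
proof -
  have "\<bar>a / h - b / h\<bar> < 1" using assms(2) by linarith
  then show ?thesis using \<open>h > 0\<close> by (simp add: field_simps abs_divide diff_divide_distrib[symmetric])
qed

lemma floor_divide_mem_range:
  fixes x B h :: real
  assumes "h > 0" "\<bar>x\<bar> \<le> B"
  shows "\<lfloor>x / h\<rfloor> \<in> {-\<lceil>B / h\<rceil> - 1..\<lceil>B / h\<rceil>}"
proof -
  have "\<bar>x / h\<bar> \<le> B / h" using assms by (simp add: abs_divide divide_right_mono)
  then have "- \<lceil>B / h\<rceil> \<le> x / h" "x / h \<le> \<lceil>B / h\<rceil>"
    using le_of_int_ceiling[of "B / h"] by (simp_all only: abs_le_iff) linarith+
  then show ?thesis by (simp add: floor_le_iff le_floor_iff)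
qed

text \<open>Total boundedness of the unit ball: grid cells of side \<open>h\<close> in coefficient space have
  \<open>L\<^sup>1\<close> diameter at most \<open>h * G < 1\<close>, so a \<open>1\<close>-separated set meets each cell at most once.\<close>

lemma comb_norm_separated_card_le:
  fixes g :: "'i \<Rightarrow> 'b \<Rightarrow> real"
  assumes fin: "finite I" and ig: "\<forall>i\<in>I. integrable M (g i)" and indep: "ae_independent M g I"
  obtains K :: nat where "\<forall>V. (\<forall>c\<in>V. comb_norm M g I c \<le> 1) \<longrightarrow>
    (\<forall>c\<in>V. \<forall>d\<in>V. c \<noteq> d \<longrightarrow> 1 \<le> comb_norm M g I (c - d)) \<longrightarrow> card V \<le> K"
proof -
  obtain \<epsilon> where \<epsilon>: "\<epsilon> > 0" "\<forall>c. \<epsilon> * (\<Sum>i\<in>I. \<bar>c i\<bar>) \<le> comb_norm M g I c"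
    by (rule comb_norm_lower_bound[OF fin ig indep])
  define G where "G = (\<Sum>i\<in>I. \<integral>t. \<bar>g i t\<bar> \<partial>M)"
  have "G \<ge> 0" unfolding G_def by (intro sum_nonneg) simp
  define h where "h = 1 / (G + 1)"
  have "h > 0" "h * G < 1" unfolding h_def using \<open>G \<ge> 0\<close> by (simp_all add: field_simps)
  define R where "R = \<lceil>(1 / \<epsilon>) / h\<rceil>"
  define Z where "Z = (\<Pi>\<^sub>E i\<in>I. {-R-1..R})"
  define cell where "cell c = restrict (\<lambda>i. \<lfloor>c i / h\<rfloor>) I" for c
  have "finite Z" unfolding Z_def using fin by (intro finite_PiE) auto
  have cell_in_Z: "cell c \<in> Z" if "comb_norm M g I c \<le> 1" for c
  proof -
    have coeff: "\<bar>c i\<bar> \<le> 1 / \<epsilon>" if "i \<in> I" for i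
      using \<epsilon>(2)[rule_format, of c] \<open>comb_norm M g I c \<le> 1\<close> member_le_sum[of i I "\<lambda>i. \<bar>c i\<bar>"] fin that \<epsilon>(1)
      by (simp add: field_simps) (smt (verit) mult_left_mono)
    have "\<lfloor>c i / h\<rfloor> \<in> {-R-1..R}" if "i \<in> I" for i
      unfolding R_def using floor_divide_mem_range[OF \<open>h > 0\<close> coeff[OF that]] .
    then show ?thesis unfolding Z_def cell_def by auto
  qed
  have cell_small: "comb_norm M g I (c - d) < 1" if "cell c = cell d" for c d
  proof -
    have "\<forall>i\<in>I. \<bar>(c - d) i\<bar> \<le> h"
      using \<open>cell c = cell d\<close> floor_divide_eq_imp_abs_diff_less[OF \<open>h > 0\<close>]
      unfolding cell_def by (metis less_imp_le minus_apply restrict_apply')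
    then have "comb_norm M g I (c - d) \<le> h * G" unfolding G_def by (rule comb_norm_le_if_coeffs_le[OF ig])
    then show ?thesis using \<open>h * G < 1\<close> by linarith
  qed
  show ?thesis
  proof (rule that, intro allI impI)
    fix V assume bounded: "\<forall>c\<in>V. comb_norm M g I c \<le> 1"
      and separated: "\<forall>c\<in>V. \<forall>d\<in>V. c \<noteq> d \<longrightarrow> 1 \<le> comb_norm M g I (c - d)"
    have "inj_on cell V" using separated cell_small by (meson inj_onI not_le)
    then show "card V \<le> card Z" using card_inj_on_le[of cell V Z] cell_in_Z bounded \<open>finite Z\<close> by blast
  qed
qed

lemma lin_comb_drop_dependent_index:
  assumes fin: "finite I" and i0: "i0 \<in> I" "a i0 \<noteq> 0"
    and dep: "AE t in M. lin_comb g I a t = 0" and h: "AE t in M. h t = lin_comb g I c t"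
  shows "\<exists>c'. AE t in M. h t = lin_comb g (I - {i0}) c' t"
proof -
  define c' where "c' i = c i - c i0 / a i0 * a i" for i
  have split: "lin_comb g I c t = lin_comb g I c' t + c i0 / a i0 * lin_comb g I a t" for t
    unfolding lin_comb_def c'_def by (simp add: algebra_simps sum_distrib_left sum_subtractf)
  have drop: "lin_comb g I c' t = lin_comb g (I - {i0}) c' t" for t
    using fin i0 unfolding lin_comb_def c'_def by (simp add: sum.remove)
  have "AE t in M. h t = lin_comb g (I - {i0}) c' t"
    using dep h by eventually_elim (simp add: split drop)
  then show ?thesis by blast
qed

text \<open>An index set of minimal cardinality among those spanning the family is independent.\<close>

lemma ex_independent_spanning_subset:
  fixes f :: "'a \<Rightarrow> 'b \<Rightarrow> real" and g :: "'i \<Rightarrow> 'b \<Rightarrow> real"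
  assumes "finite J" and span: "\<forall>x\<in>X. \<exists>c. AE t in M. f x t = lin_comb g J c t"
  obtains I where "I \<subseteq> J" "\<forall>x\<in>X. \<exists>c. AE t in M. f x t = lin_comb g I c t"
    "ae_independent M g I"
proof -
  define spanning where
    "spanning I \<longleftrightarrow> I \<subseteq> J \<and> (\<forall>x\<in>X. \<exists>c. AE t in M. f x t = lin_comb g I c t)" for I
  obtain I where I: "spanning I" and minimal: "\<And>I'. spanning I' \<Longrightarrow> card I \<le> card I'"
    using ex_has_least_nat[of spanning J card] span unfolding spanning_def by blast
  have "finite I" using I \<open>finite J\<close> finite_subset unfolding spanning_def by blast
  have "ae_independent M g I"
    unfolding ae_independent_def
  proof (intro allI impI ballI, rule ccontr)
    fix a i assume dep: "AE t in M. lin_comb g I a t = 0" and "i \<in> I" "a i \<noteq> 0"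
    then have i0: "i \<in> I" "a i \<noteq> 0" by blast+
    have "spanning (I - {i})"
      using I lin_comb_drop_dependent_index[OF \<open>finite I\<close> i0 dep] unfolding spanning_def by blast
    then have "card I \<le> card (I - {i})" by (rule minimal)
    then show False using card_Diff1_less[OF \<open>finite I\<close> i0(1)] by simp
  qed
  then show ?thesis using that I unfolding spanning_def by blast
qed

section \<open>Isometric embeddings of \<open>\<real>\<close>-trees into \<open>L\<^sup>1\<close>\<close>

definition L1_isometry :: "'b measure \<Rightarrow> 'a::metric_space set \<Rightarrow> ('a \<Rightarrow> 'b \<Rightarrow> real) \<Rightarrow> bool" where
  "L1_isometry M X f \<longleftrightarrow> (\<forall>x\<in>X. integrable M (f x)) \<and>
     (\<forall>x\<in>X. \<forall>y\<in>X. dist x y = (\<integral>t. \<bar>f x t - f y t\<bar> \<partial>M))"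

text \<open>The pointwise defect \<open>|a - b| + |b - c| - |a - c|\<close> is nonnegative with zero integral, so
  it vanishes almost everywhere.\<close>

lemma L1_dist_additive_imp_AE_monotone:
  fixes a b c :: "'b \<Rightarrow> real"
  assumes "integrable M a" "integrable M b" "integrable M c"
    and additive: "(\<integral>t. \<bar>a t - b t\<bar> \<partial>M) + (\<integral>t. \<bar>b t - c t\<bar> \<partial>M) = (\<integral>t. \<bar>a t - c t\<bar> \<partial>M)"
  shows "AE t in M. 0 \<le> (a t - b t) * (b t - c t)"
proof -
  define defect where "defect t = \<bar>a t - b t\<bar> + \<bar>b t - c t\<bar> - \<bar>a t - c t\<bar>" for t
  have "integrable M defect" unfolding defect_def using assms(1-3) by auto
  moreover have "AE t in M. 0 \<le> defect t" unfolding defect_def by (intro AE_I2) linarith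
  moreover have "integral\<^sup>L M defect = 0" unfolding defect_def using assms by simp
  ultimately have "AE t in M. defect t = 0" using integral_nonneg_eq_0_iff_AE by blast
  then show ?thesis
    by eventually_elim (smt (verit) defect_def mult_nonneg_nonneg mult_nonpos_nonpos)
qed

lemma L1_isometry_between_AE:
  assumes iso: "L1_isometry M X f" and "x \<in> X" "b \<in> X" "y \<in> X" "metric_between x b y"
  shows "AE t in M. 0 \<le> (f x t - f b t) * (f b t - f y t)"
  using assms unfolding L1_isometry_def metric_between_def
  by (intro L1_dist_additive_imp_AE_monotone) auto

lemma L1_isometry_normalized_increment:
  assumes iso: "L1_isometry M X f" and "x \<in> X" "b \<in> X" "x \<noteq> b"
  shows "(\<integral>t. \<bar>(f x t - f b t) / dist x b\<bar> \<partial>M) = 1"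
proof -
  have "(\<integral>t. \<bar>f x t - f b t\<bar> \<partial>M) = dist x b" using assms unfolding L1_isometry_def by simp
  then show ?thesis using \<open>x \<noteq> b\<close> by (simp add: abs_divide)
qed

lemma abs_diff_eq_add_abs_if_mult_nonpos: "a * b \<le> (0::real) \<Longrightarrow> \<bar>a - b\<bar> = \<bar>a\<bar> + \<bar>b\<bar>"
  unfolding mult_le_0_iff by auto

text \<open>Pointwise almost everywhere, \<open>f b\<close> lies between \<open>f x\<close> and \<open>f y\<close>, and \<open>f b'\<close> between
  \<open>f y\<close> and \<open>f x\<close>; so \<open>f x - f b\<close> and \<open>f y - f b'\<close> have opposite signs.\<close>

lemma L1_isometry_opposite_increments:
  assumes iso: "L1_isometry M X f" and X: "x \<in> X" "y \<in> X" "b \<in> X" "b' \<in> X"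
    and "x \<noteq> b" "y \<noteq> b'" and "metric_between x b y" "metric_between y b' x"
  shows "(\<integral>t. \<bar>(f x t - f b t) / dist x b - (f y t - f b' t) / dist y b'\<bar> \<partial>M) = 2"
proof -
  have [measurable]: "f x \<in> borel_measurable M" "f y \<in> borel_measurable M"
    "f b \<in> borel_measurable M" "f b' \<in> borel_measurable M"
    using iso X unfolding L1_isometry_def by auto
  have opposite: "AE t in M. (f x t - f b t) * (f y t - f b' t) \<le> 0"
    using L1_isometry_between_AE[OF iso X(1,3,2) \<open>metric_between x b y\<close>]
      L1_isometry_between_AE[OF iso X(2,4,1) \<open>metric_between y b' x\<close>]
    by eventually_elim (smt (verit) mult_le_0_iff zero_le_mult_iff)
  have pos: "dist x b * dist y b' > 0" using \<open>x \<noteq> b\<close> \<open>y \<noteq> b'\<close> by simp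
  have "AE t in M. (f x t - f b t) / dist x b * ((f y t - f b' t) / dist y b') \<le> 0"
    using opposite
  proof eventually_elim
    case (elim t)
    then show ?case using pos by (simp add: times_divide_times_eq divide_nonpos_pos)
  qed
  then have "AE t in M. \<bar>(f x t - f b t) / dist x b - (f y t - f b' t) / dist y b'\<bar> =
      \<bar>(f x t - f b t) / dist x b\<bar> + \<bar>(f y t - f b' t) / dist y b'\<bar>"
    by eventually_elim (rule abs_diff_eq_add_abs_if_mult_nonpos)
  then have "(\<integral>t. \<bar>(f x t - f b t) / dist x b - (f y t - f b' t) / dist y b'\<bar> \<partial>M) =
      (\<integral>t. \<bar>(f x t - f b t) / dist x b\<bar> + \<bar>(f y t - f b' t) / dist y b'\<bar> \<partial>M)"
    by (intro integral_cong_AE; (measurable | fact))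
  also have "\<dots> = 2"
    using iso X L1_isometry_normalized_increment[OF iso] \<open>x \<noteq> b\<close> \<open>y \<noteq> b'\<close>
    unfolding L1_isometry_def by simp
  finally show ?thesis .
qed

lemma AE_lin_comb_normalized_increment:
  assumes "AE t in M. f x t = lin_comb g I c t" "AE t in M. f b t = lin_comb g I c' t"
  shows "AE t in M. lin_comb g I (\<lambda>i. (c - c') i / dist x b) t = (f x t - f b t) / dist x b"
  using assms by eventually_elim (simp only: lin_comb_divide lin_comb_diff)

text \<open>The witnesses are the coefficient vectors of the normalised increments
  \<open>(f x - f (bf x)) / dist x (bf x)\<close> from each leaf \<open>x\<close> to its branch point \<open>bf x\<close>.\<close>

lemma L1_isometry_leaves_separated_coeffs:
  fixes f :: "'a::metric_space \<Rightarrow> 'b \<Rightarrow> real" and g :: "'i \<Rightarrow> 'b \<Rightarrow> real"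
  assumes T: "R_tree X" and iso: "L1_isometry M X f" and ig: "\<forall>i\<in>I. integrable M (g i)"
    and span: "\<forall>x\<in>X. \<exists>c. AE t in M. f x t = lin_comb g I c t"
    and F: "finite F" "F \<subseteq> Collect (leaf X)" "2 \<le> card F"
  obtains cf where "inj_on cf F" "\<forall>x\<in>F. comb_norm M g I (cf x) = 1"
    "\<forall>x\<in>F. \<forall>y\<in>F. x \<noteq> y \<longrightarrow> comb_norm M g I (cf x - cf y) = 2"
proof -
  have FX: "F \<subseteq> X" using F(2) unfolding leaf_def by blast
  obtain cx where cx: "\<forall>x\<in>X. AE t in M. f x t = lin_comb g I (cx x) t"
    using span by (rule bchoice[THEN exE])
  obtain bf where bf: "\<forall>x\<in>F. bf x \<in> X \<and> bf x \<noteq> x \<and> (\<forall>z\<in>F - {x}. metric_between x (bf x) z)"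
    by (rule R_tree_leaves_branch_map[OF T F])
  then have branch: "x \<in> X" "bf x \<in> X" "x \<noteq> bf x" if "x \<in> F" for x
    using that FX by auto
  define u where "u x t = (f x t - f (bf x) t) / dist x (bf x)" for x t
  define cf where "cf x = (\<lambda>i. (cx x - cx (bf x)) i / dist x (bf x))" for x
  have u_measurable: "u x \<in> borel_measurable M" if "x \<in> F" for x
    unfolding u_def by measurable (use iso branch[OF that] in \<open>auto simp: L1_isometry_def\<close>)
  have lin_comb_u: "AE t in M. lin_comb g I (cf x) t = u x t" if "x \<in> F" for x
    unfolding cf_def u_def using cx branch[OF that] by (intro AE_lin_comb_normalized_increment) auto
  have unit: "comb_norm M g I (cf x) = 1" if x: "x \<in> F" for x
  proof -
    have "comb_norm M g I (cf x) = (\<integral>t. \<bar>u x t\<bar> \<partial>M)"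
      using ig u_measurable[OF x] lin_comb_u[OF x] by (rule comb_norm_eq_integral_if_AE)
    also have "\<dots> = 1"
      unfolding u_def using L1_isometry_normalized_increment[OF iso branch[OF x]] .
    finally show ?thesis .
  qed
  have separated: "comb_norm M g I (cf x - cf y) = 2" if xy: "x \<in> F" "y \<in> F" "x \<noteq> y" for x y
  proof -
    have "metric_between x (bf x) y" "metric_between y (bf y) x" using bf xy by auto
    then have "(\<integral>t. \<bar>u x t - u y t\<bar> \<partial>M) = 2" unfolding u_def
      by (rule L1_isometry_opposite_increments[OF iso branch(1)[OF xy(1)] branch(1)[OF xy(2)]
          branch(2)[OF xy(1)] branch(2)[OF xy(2)] branch(3)[OF xy(1)] branch(3)[OF xy(2)]])
    then show ?thesis
      using comb_norm_diff_eq_integral_if_AE[OF ig u_measurable u_measurable lin_comb_u lin_comb_u] xy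
      by simp
  qed
  have "inj_on cf F"
  proof (rule inj_onI, rule ccontr)
    fix x y assume "x \<in> F" "y \<in> F" "cf x = cf y" "x \<noteq> y"
    then show False using separated[of x y] unfolding comb_norm_def lin_comb_def by simp
  qed
  then show ?thesis using that unit separated by blast
qed

lemma L1_isometry_finite_dim_imp_finite_leaves:
  fixes f :: "'a::metric_space \<Rightarrow> 'b \<Rightarrow> real" and g :: "'i \<Rightarrow> 'b \<Rightarrow> real"
  assumes T: "R_tree X" and iso: "L1_isometry M X f"
    and fin: "finite I" and ig: "\<forall>i\<in>I. integrable M (g i)"
    and indep: "ae_independent M g I"
    and span: "\<forall>x\<in>X. \<exists>c. AE t in M. f x t = lin_comb g I c t"
  shows "finite (Collect (leaf X))"
proof (rule ccontr)
  assume "infinite (Collect (leaf X))"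
  obtain K where K: "\<forall>V. (\<forall>c\<in>V. comb_norm M g I c \<le> 1) \<longrightarrow>
      (\<forall>c\<in>V. \<forall>d\<in>V. c \<noteq> d \<longrightarrow> 1 \<le> comb_norm M g I (c - d)) \<longrightarrow> card V \<le> K"
    by (rule comb_norm_separated_card_le[OF fin ig indep])
  obtain F where F: "finite F" "card F = K + 2" "F \<subseteq> Collect (leaf X)"
    using infinite_arbitrarily_large[OF \<open>infinite (Collect (leaf X))\<close>] by blast
  have "2 \<le> card F" using F(2) by simp
  then obtain cf where cf: "inj_on cf F" "\<forall>x\<in>F. comb_norm M g I (cf x) = 1"
    "\<forall>x\<in>F. \<forall>y\<in>F. x \<noteq> y \<longrightarrow> comb_norm M g I (cf x - cf y) = 2"
    by (rule L1_isometry_leaves_separated_coeffs[OF T iso ig span F(1,3)])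
  have "\<forall>c\<in>cf ` F. comb_norm M g I c \<le> 1" using cf(2) by simp
  moreover have "\<forall>c\<in>cf ` F. \<forall>d\<in>cf ` F. c \<noteq> d \<longrightarrow> 1 \<le> comb_norm M g I (c - d)"
  proof (intro ballI impI)
    fix c d assume "c \<in> cf ` F" "d \<in> cf ` F" "c \<noteq> d"
    then obtain x y where "x \<in> F" "y \<in> F" "x \<noteq> y" "c = cf x" "d = cf y" by blast
    then show "1 \<le> comb_norm M g I (c - d)" using cf(3) by simp
  qed
  ultimately have "card (cf ` F) \<le> K" using K[rule_format, of "cf ` F"] by blast
  then show False using F(2) card_image[OF cf(1)] by simp
qed

theorem proposition3p6:
  fixes X :: "'a::metric_space set" and M :: "'b measure"
  assumes "compact X" and "R_tree X" and "hausdorff1 (skeleton X) = \<infinity>"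
  shows "\<not> (\<exists>(f :: 'a \<Rightarrow> 'b \<Rightarrow> real) (g :: nat \<Rightarrow> 'b \<Rightarrow> real) (n :: nat).
            (\<forall>i<n. integrable M (g i)) \<and>
            (\<forall>x\<in>X. integrable M (f x) \<and>
                     (\<exists>c :: nat \<Rightarrow> real. AE t in M. f x t = (\<Sum>i<n. c i * g i t))) \<and>
            (\<forall>x\<in>X. \<forall>y\<in>X. dist x y = (\<integral>t. \<bar>f x t - f y t\<bar> \<partial>M)))"
proof (intro notI, elim exE conjE)
  fix f :: "'a \<Rightarrow> 'b \<Rightarrow> real" and g :: "nat \<Rightarrow> 'b \<Rightarrow> real" and n
  assume g: "\<forall>i<n. integrable M (g i)"
    and f: "\<forall>x\<in>X. integrable M (f x) \<and> (\<exists>c. AE t in M. f x t = (\<Sum>i<n. c i * g i t))"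
    and isometric: "\<forall>x\<in>X. \<forall>y\<in>X. dist x y = (\<integral>t. \<bar>f x t - f y t\<bar> \<partial>M)"
  have iso: "L1_isometry M X f" using f isometric unfolding L1_isometry_def by blast
  have span: "\<forall>x\<in>X. \<exists>c. AE t in M. f x t = lin_comb g {..<n} c t"
    using f unfolding lin_comb_def by blast
  obtain I where I: "I \<subseteq> {..<n}" "\<forall>x\<in>X. \<exists>c. AE t in M. f x t = lin_comb g I c t"
    "ae_independent M g I"
    by (rule ex_independent_spanning_subset[OF finite_lessThan span])
  have "finite I" "\<forall>i\<in>I. integrable M (g i)" using I(1) g finite_subset by auto
  then have "finite (Collect (leaf X))"
    using L1_isometry_finite_dim_imp_finite_leaves[OF assms(2) iso _ _ I(3,2)] by blast
  then have "hausdorff1 (skeleton X) \<noteq> \<infinity>"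
    by (rule R_tree_hausdorff1_skeleton_finite[OF assms(1,2)])
  then show False using assms(3) by simp
qed

end
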